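(* Let $s\ge3$ and $k\ge1$ be integers and let $T$ be a tree with every vertex of degree at most $s$ and with $v(T)\ge k+1$. Then $T$ has a branch $B$ such that $v(B)\le (s-1)k+1$ and $\tau_k(B)=1$.
   Context: All graphs are finite and simple; $v(\cdot)$ is the number of vertices. A branch of a tree $T$ is a subtree $B$ of $T$ such that either $B=T$ or $T-V(B)$ is also a (nonempty) tree. For $k\ge1$, $\tau_k(G)$ denotes the maximum number of pairwise vertex-disjoint subgraphs of $G$ each of which is a tree with exactly $k$ edges. *)

theory Defs
  imports Main
begin

definition graph :: "'a set \<Rightarrow> 'a set set \<Rightarrow> bool" where
  "graph V E \<longleftrightarrow> finite V \<and> (\<forall>e\<in>E. \<exists>x y. x \<in> V \<and> y \<in> V \<and> x \<noteq> y \<and> e = {x, y})"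

definition adj :: "'a set set \<Rightarrow> 'a \<Rightarrow> 'a \<Rightarrow> bool" where
  "adj E x y \<longleftrightarrow> x \<noteq> y \<and> {x, y} \<in> E"

definition degree :: "'a set set \<Rightarrow> 'a \<Rightarrow> nat" where
  "degree E v = card {e \<in> E. v \<in> e}"

definition connected_graph :: "'a set \<Rightarrow> 'a set set \<Rightarrow> bool" where
  "connected_graph V E \<longleftrightarrow> V \<noteq> {} \<and> (\<forall>x\<in>V. \<forall>y\<in>V. (adj E)\<^sup>*\<^sup>* x y)"

definition is_cycle :: "'a set set \<Rightarrow> 'a list \<Rightarrow> bool" where
  "is_cycle E cs \<longleftrightarrow> length cs \<ge> 3 \<and> distinct cs \<and>
     (\<forall>i < length cs. adj E (cs ! i) (cs ! ((i + 1) mod length cs)))"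

definition tree :: "'a set \<Rightarrow> 'a set set \<Rightarrow> bool" where
  "tree V E \<longleftrightarrow> graph V E \<and> connected_graph V E \<and> \<not> (\<exists>cs. set cs \<subseteq> V \<and> is_cycle E cs)"

definition subgraph :: "'a set \<Rightarrow> 'a set set \<Rightarrow> 'a set \<Rightarrow> 'a set set \<Rightarrow> bool" where
  "subgraph V' E' V E \<longleftrightarrow> graph V' E' \<and> V' \<subseteq> V \<and> E' \<subseteq> E"

definition branch :: "'a set \<Rightarrow> 'a set set \<Rightarrow> 'a set \<Rightarrow> 'a set set \<Rightarrow> bool" where
  "branch VB EB V E \<longleftrightarrow> subgraph VB EB V E \<and> tree VB EB \<and>
     ((VB = V \<and> EB = E) \<or>
      (V - VB \<noteq> {} \<and> tree (V - VB) {e \<in> E. e \<inter> VB = {}}))"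

definition tau :: "nat \<Rightarrow> 'a set \<Rightarrow> 'a set set \<Rightarrow> nat" where
  "tau k V E = Max {card F | F.
      (\<forall>(V', E') \<in> F. subgraph V' E' V E \<and> tree V' E' \<and> card E' = k) \<and>
      (\<forall>p\<in>F. \<forall>q\<in>F. p \<noteq> q \<longrightarrow> fst p \<inter> fst q = {})}"

end

theory Submission
  imports Defs
begin

text \<open>For an edge ab of the tree T let side a b be the vertex set of the component of
  T - ab containing b; it spans a branch whose complement is side b a.

  If some side has more than k vertices, take such a side side u w of minimum size. For every
  other neighbour z of w, side w z is a proper subset of side u w, hence has at most k vertices.
  As side u w consists of w and at most s - 1 such sides, it has at most (s - 1) k + 1 vertices;
  and a subtree with k edges, having k + 1 vertices, cannot avoid w, since it would then lie in a
  single side w z. So any two such subtrees meet in w, and tau_k = 1.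

  Otherwise T, the union of the two sides of any edge, has at most 2k \<le> (s - 1) k vertices,
  too few for two disjoint subtrees with k + 1 vertices each, and B = T works.\<close>

lemma adj_commute: "adj E x y \<longleftrightarrow> adj E y x"
  unfolding adj_def by (auto simp: insert_commute)

lemma adj_rtranclp_sym: "(adj E)\<^sup>*\<^sup>* x y \<Longrightarrow> (adj E)\<^sup>*\<^sup>* y x"
  using symp_rtranclp[of "adj E"] by (auto simp: symp_def adj_commute)

lemma adj_rtranclp_mono: "(adj F)\<^sup>*\<^sup>* x y \<Longrightarrow> F \<subseteq> E \<Longrightarrow> (adj E)\<^sup>*\<^sup>* x y"
  using mono_rtranclp[of "adj F" "adj E"] unfolding adj_def by blast

lemma graph_finite: "graph V E \<Longrightarrow> finite V"
  unfolding graph_def by simp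

lemma graph_edgeE:
  assumes "graph V E" "e \<in> E"
  obtains x y where "x \<in> V" "y \<in> V" "adj E x y" "e = {x, y}"
proof -
  obtain x y where "x \<in> V" "y \<in> V" "x \<noteq> y" "e = {x, y}"
    using assms unfolding graph_def by blast
  with assms that show thesis unfolding adj_def by blast
qed

lemma graph_edge_subset: "graph V E \<Longrightarrow> e \<in> E \<Longrightarrow> e \<subseteq> V"
  by (elim graph_edgeE) auto

lemma graph_finite_edges: "graph V E \<Longrightarrow> finite E"
proof -
  assume g: "graph V E"
  then have "E \<subseteq> Pow V" using graph_edge_subset by blast
  with g show ?thesis using graph_finite finite_subset by blast
qed

lemma graph_adj_vertices: "graph V E \<Longrightarrow> adj E x y \<Longrightarrow> x \<in> V \<and> y \<in> V"
  unfolding adj_def using graph_edge_subset by blast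

lemma graph_rtranclp_vertices:
  "(adj F)\<^sup>*\<^sup>* x y \<Longrightarrow> graph V E \<Longrightarrow> F \<subseteq> E \<Longrightarrow> x \<in> V \<Longrightarrow> y \<in> V"
proof (induction rule: rtranclp_induct)
  case (step y z)
  then show ?case using graph_adj_vertices[of V E y z] unfolding adj_def by blast
qed

lemma connected_graphI_root:
  assumes "r \<in> V" "\<And>x. x \<in> V \<Longrightarrow> (adj E)\<^sup>*\<^sup>* r x"
  shows "connected_graph V E"
  unfolding connected_graph_def
proof (intro conjI ballI)
  fix x y assume "x \<in> V" "y \<in> V"
  then have "(adj E)\<^sup>*\<^sup>* x r" "(adj E)\<^sup>*\<^sup>* r y" by (simp_all add: assms(2) adj_rtranclp_sym)
  then show "(adj E)\<^sup>*\<^sup>* x y" by (rule rtranclp_trans)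
qed (use assms(1) in auto)

section \<open>Walks and cycles\<close>

fun walk :: "'a set set \<Rightarrow> 'a list \<Rightarrow> bool" where
  "walk E [] = True"
| "walk E [x] = True"
| "walk E (x # y # xs) \<longleftrightarrow> adj E x y \<and> walk E (y # xs)"

lemma walk_ConsD: "walk E (x # xs) \<Longrightarrow> walk E xs"
  by (cases xs) auto

lemma walk_appendD2: "walk E (xs @ ys) \<Longrightarrow> walk E ys"
  by (induction xs) (auto dest: walk_ConsD)

lemma walk_nth: "walk E xs \<Longrightarrow> Suc i < length xs \<Longrightarrow> adj E (xs ! i) (xs ! Suc i)"
proof (induction E xs arbitrary: i rule: walk.induct)
  case (3 E x y xs)
  then show ?case by (cases i) auto
qed auto

lemma walk_mono: "walk F xs \<Longrightarrow> F \<subseteq> E \<Longrightarrow> walk E xs"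
  by (induction F xs rule: walk.induct) (auto simp: adj_def)

lemma walk_vertices:
  "graph V E \<Longrightarrow> walk E xs \<Longrightarrow> xs \<noteq> [] \<Longrightarrow> hd xs \<in> V \<Longrightarrow> set xs \<subseteq> V"
  by (induction E xs rule: walk.induct) (auto dest: graph_adj_vertices)

lemma rtranclp_adj_distinct_walk:
  assumes "(adj E)\<^sup>*\<^sup>* x y"
  shows "\<exists>xs. xs \<noteq> [] \<and> hd xs = x \<and> last xs = y \<and> distinct xs \<and> walk E xs"
  using assms
proof (induction rule: converse_rtranclp_induct)
  case base
  show ?case by (intro exI[of _ "[y]"]) auto
next
  case (step x z)
  then obtain ys where ys: "ys \<noteq> []" "hd ys = z" "last ys = y" "distinct ys" "walk E ys"
    by blast
  show ?case
  proof (cases "x \<in> set ys")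
    case True
    then obtain p q where "ys = p @ x # q" by (meson split_list)
    with ys show ?thesis
      by (intro exI[of _ "x # q"]) (auto dest: walk_appendD2)
  next
    case False
    with ys step(1) show ?thesis
      by (intro exI[of _ "x # ys"]) (cases ys, auto)
  qed
qed

definition cycle_free :: "'a set \<Rightarrow> 'a set set \<Rightarrow> bool" where
  "cycle_free V E \<longleftrightarrow> \<not> (\<exists>cs. set cs \<subseteq> V \<and> is_cycle E cs)"

lemma tree_iff_cycle_free: "tree V E \<longleftrightarrow> graph V E \<and> connected_graph V E \<and> cycle_free V E"
  unfolding tree_def cycle_free_def by simp

lemma is_cycle_mono: "is_cycle F cs \<Longrightarrow> F \<subseteq> E \<Longrightarrow> is_cycle E cs"
  unfolding is_cycle_def adj_def by blast

lemma cycle_free_subgraph: "cycle_free V E \<Longrightarrow> V' \<subseteq> V \<Longrightarrow> E' \<subseteq> E \<Longrightarrow> cycle_free V' E'"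
  unfolding cycle_free_def using is_cycle_mono by (metis order_trans)

lemma walk_is_cycle:
  assumes "walk E xs" "distinct xs" "3 \<le> length xs" "adj E (last xs) (hd xs)"
  shows "is_cycle E xs"
  unfolding is_cycle_def
proof (intro conjI allI impI)
  fix i assume i: "i < length xs"
  show "adj E (xs ! i) (xs ! ((i + 1) mod length xs))"
  proof (cases "Suc i < length xs")
    case True
    then show ?thesis using walk_nth[OF assms(1)] by simp
  next
    case False
    then have "i = length xs - 1" using i by simp
    then show ?thesis
      using assms(3,4) by (simp add: last_conv_nth hd_conv_nth flip: length_greater_0_conv)
  qed
qed (use assms in auto)

lemma cycle_free_bridge:
  assumes g: "graph V E" and cf: "cycle_free V E" and ab: "adj E a b"
  shows "\<not> (adj (E - {{a, b}}))\<^sup>*\<^sup>* b a"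
proof
  let ?F = "E - {{a, b}}"
  assume "(adj ?F)\<^sup>*\<^sup>* b a"
  then obtain xs where xs: "xs \<noteq> []" "hd xs = b" "last xs = a" "distinct xs" "walk ?F xs"
    using rtranclp_adj_distinct_walk by metis
  have "length xs \<noteq> 1"
    using xs ab by (metis adj_def last_ConsL length_Suc_conv length_0_conv list.sel(1) One_nat_def)
  moreover have "length xs \<noteq> 2"
  proof
    assume "length xs = 2"
    then obtain c d where "xs = [c, d]" by (auto simp: numeral_2_eq_2 length_Suc_conv)
    with xs have "adj ?F b a" by simp
    then show False unfolding adj_def by (auto simp: insert_commute)
  qed
  moreover have "length xs \<noteq> 0" using xs(1) by simp
  ultimately have "3 \<le> length xs" by linarith
  moreover have "walk E xs" using walk_mono[OF xs(5)] by blast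
  moreover have "adj E (last xs) (hd xs)" using ab xs(2,3) by simp
  ultimately have "is_cycle E xs" using walk_is_cycle xs(4) by blast
  moreover have "set xs \<subseteq> V"
    using walk_vertices[OF g \<open>walk E xs\<close> xs(1)] xs(2) ab graph_adj_vertices[OF g] by blast
  ultimately show False using cf unfolding cycle_free_def by blast
qed

section \<open>The two sides of a tree edge\<close>

definition side :: "'a set \<Rightarrow> 'a set set \<Rightarrow> 'a \<Rightarrow> 'a \<Rightarrow> 'a set" where
  "side V E a b = {x\<in>V. (adj (E - {{a, b}}))\<^sup>*\<^sup>* b x}"

lemma side_subset: "side V E a b \<subseteq> V"
  unfolding side_def by auto

lemma finite_side: "graph V E \<Longrightarrow> finite (side V E a b)"
  using graph_finite finite_subset[OF side_subset] by metis

lemma target_in_side: "graph V E \<Longrightarrow> adj E a b \<Longrightarrow> b \<in> side V E a b"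
  unfolding side_def by (simp add: graph_adj_vertices)

lemma source_notin_side: "graph V E \<Longrightarrow> cycle_free V E \<Longrightarrow> adj E a b \<Longrightarrow> a \<notin> side V E a b"
  unfolding side_def by (simp add: cycle_free_bridge)

lemma side_rtranclp_closed:
  assumes "graph V E" "x \<in> side V E a b" "(adj (E - {{a, b}}))\<^sup>*\<^sup>* x y"
  shows "y \<in> side V E a b"
proof -
  have "(adj (E - {{a, b}}))\<^sup>*\<^sup>* b x" "x \<in> V" using assms(2) unfolding side_def by auto
  then have "(adj (E - {{a, b}}))\<^sup>*\<^sup>* b y" "y \<in> V"
    using rtranclp_trans[OF _ assms(3)] graph_rtranclp_vertices[OF assms(3,1)] by auto
  then show ?thesis unfolding side_def by simp
qed

lemma side_cover:
  assumes g: "graph V E" and c: "connected_graph V E" and ab: "adj E a b"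
  shows "V = side V E a b \<union> side V E b a"
proof -
  let ?F = "E - {{a, b}}"
  have "(adj ?F)\<^sup>*\<^sup>* b x \<or> (adj ?F)\<^sup>*\<^sup>* a x" if "x \<in> V" for x
  proof -
    have "(adj E)\<^sup>*\<^sup>* a x" using c ab that graph_adj_vertices[OF g] unfolding connected_graph_def by blast
    then show ?thesis
    proof (induction rule: rtranclp_induct)
      case (step y z)
      show ?case
      proof (cases "{y, z} = {a, b}")
        case True
        then have "z = a \<or> z = b" by (metis doubleton_eq_iff)
        then show ?thesis by auto
      next
        case False
        then have "adj ?F y z" using step(2) unfolding adj_def by auto
        with step(3) show ?thesis by (meson rtranclp.rtrancl_into_rtrancl)
      qed
    qed simp
  qed
  then show ?thesis using side_subset unfolding side_def by (fastforce simp: insert_commute)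
qed

lemma sides_disjoint:
  assumes g: "graph V E" and cf: "cycle_free V E" and ab: "adj E a b"
  shows "side V E a b \<inter> side V E b a = {}"
proof (rule ccontr)
  let ?F = "E - {{a, b}}"
  assume "side V E a b \<inter> side V E b a \<noteq> {}"
  then obtain x where "(adj ?F)\<^sup>*\<^sup>* b x" "(adj ?F)\<^sup>*\<^sup>* a x"
    unfolding side_def by (auto simp: insert_commute)
  then have "(adj ?F)\<^sup>*\<^sup>* b a" using adj_rtranclp_sym rtranclp_trans by metis
  with cycle_free_bridge[OF g cf ab] show False by simp
qed

lemma connected_subgraph_within_side:
  assumes g: "graph V E" and E1: "E1 \<subseteq> E - {{a, b}}" and c1: "connected_graph V1 E1"
    and x: "x \<in> V1" "x \<in> side V E a b"
  shows "V1 \<subseteq> side V E a b"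
proof
  fix y assume "y \<in> V1"
  with c1 x have "(adj E1)\<^sup>*\<^sup>* x y" unfolding connected_graph_def by blast
  then have "(adj (E - {{a, b}}))\<^sup>*\<^sup>* x y" using E1 by (rule adj_rtranclp_mono)
  with g x(2) show "y \<in> side V E a b" by (rule side_rtranclp_closed)
qed

lemma edge_within_side:
  assumes g: "graph V E" and c: "connected_graph V E" and ab: "adj E a b"
    and f: "f \<in> E" "f \<noteq> {a, b}"
  shows "f \<subseteq> side V E a b \<or> f \<subseteq> side V E b a"
proof -
  obtain x y where xy: "x \<in> V" "adj E x y" "f = {x, y}" using graph_edgeE[OF g f(1)] by metis
  have "adj (E - {{a, b}}) x y" "adj (E - {{b, a}}) x y"
    using xy f unfolding adj_def by (auto simp: insert_commute)
  then have "(adj (E - {{a, b}}))\<^sup>*\<^sup>* x y" "(adj (E - {{b, a}}))\<^sup>*\<^sup>* x y" by auto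
  with side_cover[OF g c ab] xy(1,3) show ?thesis
    using side_rtranclp_closed[OF g] by blast
qed

lemma tree_side:
  assumes g: "graph V E" and cf: "cycle_free V E" and ab: "adj E a b"
  shows "tree (side V E a b) {f\<in>E. f \<subseteq> side V E a b}"
proof -
  let ?S = "side V E a b" and ?F = "E - {{a, b}}"
  let ?ES = "{f\<in>E. f \<subseteq> ?S}"
  have "graph ?S ?ES"
    unfolding graph_def
  proof (intro conjI ballI)
    fix f assume f: "f \<in> ?ES"
    then have "f \<in> E" by simp
    then obtain x y where "adj E x y" "f = {x, y}" by (meson graph_edgeE[OF g])
    with f show "\<exists>x y. x \<in> ?S \<and> y \<in> ?S \<and> x \<noteq> y \<and> f = {x, y}"
      unfolding adj_def by auto
  qed (rule finite_side[OF g])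
  moreover have "(adj ?ES)\<^sup>*\<^sup>* b x" if "x \<in> ?S" for x
  proof -
    have "(adj ?F)\<^sup>*\<^sup>* b x" using that unfolding side_def by simp
    then have "x \<in> ?S \<and> (adj ?ES)\<^sup>*\<^sup>* b x"
    proof (induction rule: rtranclp_induct)
      case base
      then show ?case using target_in_side[OF g ab] by simp
    next
      case (step y z)
      have "z \<in> ?S"
        using side_rtranclp_closed[OF g conjunct1[OF step(3)] r_into_rtranclp[where r = "adj ?F", OF step(2)]] .
      moreover have "y \<in> ?S" using step(3) by simp
      ultimately have "adj ?ES y z" using step(2) unfolding adj_def by auto
      with step(3) \<open>z \<in> ?S\<close> show ?case by (meson rtranclp.rtrancl_into_rtrancl)
    qed
    then show ?thesis by simp
  qed
  then have "connected_graph ?S ?ES"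
    by (rule connected_graphI_root[OF target_in_side[OF g ab]])
  moreover have "cycle_free ?S ?ES" by (rule cycle_free_subgraph[OF cf side_subset]) auto
  ultimately show ?thesis by (simp add: tree_iff_cycle_free)
qed

lemma side_branch:
  assumes t: "tree V E" and ab: "adj E a b"
  shows "branch (side V E a b) {f\<in>E. f \<subseteq> side V E a b} V E"
proof -
  have g: "graph V E" and c: "connected_graph V E" and cf: "cycle_free V E"
    using t by (simp_all add: tree_iff_cycle_free)
  let ?S = "side V E a b"
  have ba: "adj E b a" using ab by (simp add: adj_commute)
  have rest: "V - ?S = side V E b a"
    using side_cover[OF g c ab] sides_disjoint[OF g cf ab] by blast
  have "{f\<in>E. f \<inter> ?S = {}} = {f\<in>E. f \<subseteq> side V E b a}"
    using graph_edge_subset[OF g] rest by blast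
  moreover have "tree ?S {f\<in>E. f \<subseteq> ?S}" by (rule tree_side[OF g cf ab])
  moreover have "V - ?S \<noteq> {}" using rest target_in_side[OF g ba] by blast
  ultimately show ?thesis
    unfolding branch_def subgraph_def rest
    using tree_side[OF g cf ba] side_subset[of V E a b] by (auto simp: tree_iff_cycle_free)
qed

lemma tree_card_edges: "tree V E \<Longrightarrow> card E < card V"
proof (induction "card V" arbitrary: V E rule: less_induct)
  case less
  have g: "graph V E" and c: "connected_graph V E" and cf: "cycle_free V E"
    using less.prems by (simp_all add: tree_iff_cycle_free)
  show ?case
  proof (cases "E = {}")
    case True
    with c graph_finite[OF g] show ?thesis unfolding connected_graph_def by auto
  next
    case False
    then obtain a b where ab: "adj E a b" using graph_edgeE[OF g] by (metis ex_in_conv)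
    then have ba: "adj E b a" by (simp add: adj_commute)
    define A where "A = side V E a b"
    define B where "B = side V E b a"
    have V: "V = A \<union> B" "A \<inter> B = {}"
      unfolding A_def B_def using side_cover[OF g c ab] sides_disjoint[OF g cf ab] by auto
    have "A \<noteq> {}" "B \<noteq> {}"
      unfolding A_def B_def using target_in_side[OF g] ab ba by blast+
    then have "card A < card V" "card B < card V"
      using V graph_finite[OF g] by (auto intro!: psubset_card_mono)
    then have IH: "card {f\<in>E. f \<subseteq> A} < card A" "card {f\<in>E. f \<subseteq> B} < card B"
      unfolding A_def B_def using less.hyps tree_side[OF g cf ab] tree_side[OF g cf ba] by blast+
    let ?EAB = "{f\<in>E. f \<subseteq> A} \<union> {f\<in>E. f \<subseteq> B}"
    have "E \<subseteq> insert {a, b} ?EAB"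
      unfolding A_def B_def using edge_within_side[OF g c ab] by blast
    moreover have "finite ?EAB" using graph_finite_edges[OF g] by simp
    ultimately have "card E \<le> card (insert {a, b} ?EAB)" by (simp add: card_mono)
    also have "\<dots> \<le> Suc (card ?EAB)" by (simp add: card_insert_le_m1)
    also have "\<dots> \<le> Suc (card {f\<in>E. f \<subseteq> A} + card {f\<in>E. f \<subseteq> B})"
      using card_Un_le by simp
    also have "\<dots> < card A + card B" using IH by simp
    also have "\<dots> = card V" using V graph_finite[OF g] by (simp add: card_Un_disjoint)
    finally show ?thesis .
  qed
qed

section \<open>Subtrees with k edges\<close>

lemma rtranclp_exits:
  assumes "r\<^sup>*\<^sup>* x y" "x \<in> W" "y \<notin> W"
  shows "\<exists>a b. a \<in> W \<and> b \<notin> W \<and> r a b"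
  using assms by (induction rule: rtranclp_induct) auto

lemma connected_graph_insert_pendant:
  assumes g: "graph V E" and c: "connected_graph V E" and a: "a \<in> V" and b: "b \<notin> V"
  shows "graph (insert b V) (insert {a, b} E) \<and> connected_graph (insert b V) (insert {a, b} E)"
proof
  show "graph (insert b V) (insert {a, b} E)"
    using g a b unfolding graph_def by blast
  have "(adj (insert {a, b} E))\<^sup>*\<^sup>* a x" if "x \<in> insert b V" for x
  proof (cases "x = b")
    case True
    with a b have "adj (insert {a, b} E) a x" unfolding adj_def by auto
    then show ?thesis by simp
  next
    case False
    with that c a have "(adj E)\<^sup>*\<^sup>* a x" unfolding connected_graph_def by simp
    then show ?thesis by (rule adj_rtranclp_mono) auto
  qed
  then show "connected_graph (insert b V) (insert {a, b} E)"
    by (rule connected_graphI_root[OF insertI2[OF a]])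
qed

lemma connected_subgraph_card:
  assumes g: "graph S ES" and c: "connected_graph S ES" and j: "j < card S"
  shows "\<exists>V' E'. V' \<subseteq> S \<and> E' \<subseteq> ES \<and> card V' = j + 1 \<and> card E' = j \<and>
           graph V' E' \<and> connected_graph V' E'"
  using j
proof (induction j)
  case 0
  then obtain x where "x \<in> S" by fastforce
  moreover have "graph {x} {}" "connected_graph {x} {}"
    unfolding graph_def connected_graph_def by simp_all
  ultimately show ?case by (intro exI[of _ "{x}"] exI[of _ "{}"]) simp
next
  case (Suc j)
  then obtain V' E' where V': "V' \<subseteq> S" "E' \<subseteq> ES" "card V' = j + 1" "card E' = j"
    "graph V' E'" "connected_graph V' E'" by auto
  have "V' \<noteq> S" using V'(3) Suc.prems by auto
  with V'(1) obtain y where y: "y \<in> S" "y \<notin> V'" by blast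
  obtain x where x: "x \<in> V'" using V'(6) unfolding connected_graph_def by blast
  with y c V'(1) have "(adj ES)\<^sup>*\<^sup>* x y" unfolding connected_graph_def by blast
  with x y obtain a b where ab: "a \<in> V'" "b \<notin> V'" "adj ES a b"
    using rtranclp_exits[of "adj ES" x y V'] by blast
  then have "{a, b} \<in> ES" "b \<in> S" using graph_adj_vertices[OF g] unfolding adj_def by auto
  moreover have "{a, b} \<notin> E'" using ab(2) graph_edge_subset[OF V'(5)] by blast
  moreover have "finite V'" "finite E'"
    using graph_finite[OF V'(5)] graph_finite_edges[OF V'(5)] by auto
  ultimately show ?case
    using connected_graph_insert_pendant[OF V'(5,6) ab(1,2)] V' ab(2)
    by (intro exI[of _ "insert b V'"] exI[of _ "insert {a, b} E'"]) auto
qed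

lemma tree_subtree_card_edges:
  assumes t: "tree S ES" and k: "k < card S"
  shows "\<exists>V' E'. subgraph V' E' S ES \<and> tree V' E' \<and> card E' = k"
proof -
  have g: "graph S ES" and c: "connected_graph S ES" and cf: "cycle_free S ES"
    using t by (simp_all add: tree_iff_cycle_free)
  obtain V' E' where V': "V' \<subseteq> S" "E' \<subseteq> ES" "card E' = k" "graph V' E'" "connected_graph V' E'"
    using connected_subgraph_card[OF g c k] by blast
  then have "tree V' E'" using cycle_free_subgraph[OF cf] by (simp add: tree_iff_cycle_free)
  with V' show ?thesis unfolding subgraph_def by blast
qed

lemma tau_eq_1I:
  assumes ex: "subgraph V0 E0 V E" "tree V0 E0" "card E0 = k"
    and meet: "\<And>V1 E1 V2 E2. subgraph V1 E1 V E \<Longrightarrow> tree V1 E1 \<Longrightarrow> card E1 = k \<Longrightarrow>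
       subgraph V2 E2 V E \<Longrightarrow> tree V2 E2 \<Longrightarrow> card E2 = k \<Longrightarrow> V1 \<inter> V2 \<noteq> {}"
  shows "tau k V E = 1"
proof -
  define packing where "packing F \<longleftrightarrow>
      (\<forall>(V', E') \<in> F. subgraph V' E' V E \<and> tree V' E' \<and> card E' = k) \<and>
      (\<forall>p\<in>F. \<forall>q\<in>F. p \<noteq> q \<longrightarrow> fst p \<inter> fst q = {})" for F :: "('a set \<times> 'a set set) set"
  have tau: "tau k V E = Max {card F | F. packing F}"
    unfolding tau_def packing_def by simp
  have "packing {(V0, E0)}" unfolding packing_def using ex by simp
  then have one: "1 \<in> {card F | F. packing F}" by force
  have le: "card F \<le> 1" if "packing F" for F
  proof -
    have "p = q" if "p \<in> F" "q \<in> F" for p q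
    proof -
      obtain V1 E1 V2 E2 where pq: "p = (V1, E1)" "q = (V2, E2)" by fastforce
      with \<open>packing F\<close> \<open>p \<in> F\<close> \<open>q \<in> F\<close>
      have "subgraph V1 E1 V E \<and> tree V1 E1 \<and> card E1 = k"
        and "subgraph V2 E2 V E \<and> tree V2 E2 \<and> card E2 = k"
        unfolding packing_def by auto
      moreover have "p \<noteq> q \<longrightarrow> fst p \<inter> fst q = {}"
        using \<open>packing F\<close> \<open>p \<in> F\<close> \<open>q \<in> F\<close> unfolding packing_def by blast
      ultimately show ?thesis using meet pq by fastforce
    qed
    then show ?thesis by (cases "finite F") (auto simp: card_le_Suc0_iff_eq)
  qed
  have "{card F | F. packing F} \<subseteq> {..1}" using le by auto
  then have "finite {card F | F. packing F}" by (rule finite_subset) simp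
  then show ?thesis unfolding tau using one le by (intro Max_eqI) auto
qed

section \<open>A minimal large side\<close>

lemma side_subset_neighbour_sides:
  assumes g: "graph V E" and cf: "cycle_free V E" and uw: "adj E u w"
  shows "side V E u w \<subseteq> insert w (\<Union>z \<in> {z. adj E w z} - {u}. side V E w z)"
proof
  fix x assume "x \<in> side V E u w"
  then have "(adj (E - {{u, w}}))\<^sup>*\<^sup>* w x" unfolding side_def by simp
  then show "x \<in> insert w (\<Union>z \<in> {z. adj E w z} - {u}. side V E w z)"
  proof (induction rule: rtranclp_induct)
    case (step y y')
    then have yy': "adj E y y'" "{y, y'} \<noteq> {u, w}" unfolding adj_def by auto
    from step(3) consider "y = w" | z where "adj E w z" "z \<noteq> u" "y \<in> side V E w z" by blast
    then show ?case
    proof cases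
      case 1
      with yy' have "adj E w y'" "y' \<noteq> u" by (auto simp: insert_commute)
      then show ?thesis using target_in_side[OF g] by blast
    next
      case (2 z)
      have "y \<noteq> w" using source_notin_side[OF g cf \<open>adj E w z\<close>] 2(3) by blast
      show ?thesis
      proof (cases "{y, y'} = {w, z}")
        case True
        with \<open>y \<noteq> w\<close> show ?thesis by (auto simp: doubleton_eq_iff)
      next
        case False
        with yy'(1) have "(adj (E - {{w, z}}))\<^sup>*\<^sup>* y y'" unfolding adj_def by auto
        with 2 show ?thesis using side_rtranclp_closed[OF g 2(3)] by blast
      qed
    qed
  qed simp
qed

lemma side_psubset_side:
  assumes g: "graph V E" and cf: "cycle_free V E" and uw: "adj E u w"
    and wz: "adj E w z" and "z \<noteq> u"
  shows "side V E w z \<subset> side V E u w"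
proof -
  have "{w, z} \<noteq> {u, w}" using \<open>z \<noteq> u\<close> wz by (auto simp: doubleton_eq_iff adj_def)
  with wz have "(adj (E - {{u, w}}))\<^sup>*\<^sup>* w z" unfolding adj_def by auto
  then have "z \<in> side V E u w" by (rule side_rtranclp_closed[OF g target_in_side[OF g uw]])
  moreover have w_notin: "w \<notin> side V E w z" by (rule source_notin_side[OF g cf wz])
  moreover have "{f\<in>E. f \<subseteq> side V E w z} \<subseteq> E - {{u, w}}" using w_notin by auto
  moreover have "connected_graph (side V E w z) {f\<in>E. f \<subseteq> side V E w z}"
    using tree_side[OF g cf wz] by (simp add: tree_iff_cycle_free)
  ultimately have "side V E w z \<subseteq> side V E u w"
    using connected_subgraph_within_side[OF g] target_in_side[OF g wz] by blast
  with w_notin target_in_side[OF g uw] show ?thesis by blast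
qed

lemma card_neighbours_le_degree: "finite E \<Longrightarrow> card {z. adj E w z} \<le> degree E w"
  unfolding degree_def adj_def
  by (rule card_inj_on_le[of "\<lambda>z. {w, z}"]) (auto simp: inj_on_def doubleton_eq_iff)

lemma card_side_le:
  assumes g: "graph V E" and cf: "cycle_free V E" and uw: "adj E u w"
    and deg: "degree E w \<le> s" and small: "\<And>z. adj E w z \<Longrightarrow> z \<noteq> u \<Longrightarrow> card (side V E w z) \<le> k"
  shows "card (side V E u w) \<le> (s - 1) * k + 1"
proof -
  let ?N = "{z. adj E w z} - {u}"
  have fin: "finite {z. adj E w z}"
    using graph_finite[OF g] graph_adj_vertices[OF g] by (auto intro: finite_subset)
  have "u \<in> {z. adj E w z}" using uw by (simp add: adj_commute)
  then have "card ?N \<le> s - 1"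
    using card_neighbours_le_degree[OF graph_finite_edges[OF g], of w] deg fin by simp
  have "card (side V E u w) \<le> card (insert w (\<Union>z \<in> ?N. side V E w z))"
    using side_subset_neighbour_sides[OF g cf uw] fin finite_side[OF g] by (intro card_mono) auto
  also have "\<dots> \<le> Suc (card (\<Union>z \<in> ?N. side V E w z))"
    using fin finite_side[OF g] by (simp add: card_insert_if)
  also have "\<dots> \<le> Suc (\<Sum>z \<in> ?N. card (side V E w z))" using card_UN_le[of ?N] fin by simp
  also have "\<dots> \<le> Suc (card ?N * k)" using sum_bounded_above[of ?N _ k] small by simp
  also have "\<dots> \<le> (s - 1) * k + 1" using \<open>card ?N \<le> s - 1\<close> by (simp add: mult_le_mono1)
  finally show ?thesis .
qed

lemma subtree_of_side_contains_target:
  assumes g: "graph V E" and cf: "cycle_free V E" and uw: "adj E u w"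
    and small: "\<And>z. adj E w z \<Longrightarrow> z \<noteq> u \<Longrightarrow> card (side V E w z) \<le> k"
    and sub: "V1 \<subseteq> side V E u w" "E1 \<subseteq> E" and t1: "tree V1 E1" "card E1 = k"
  shows "w \<in> V1"
proof (rule ccontr)
  assume "w \<notin> V1"
  have g1: "graph V1 E1" and c1: "connected_graph V1 E1" using t1(1) by (simp_all add: tree_iff_cycle_free)
  obtain x where "x \<in> V1" using c1 unfolding connected_graph_def by blast
  with sub(1) \<open>w \<notin> V1\<close> obtain z where z: "adj E w z" "z \<noteq> u" "x \<in> side V E w z"
    using side_subset_neighbour_sides[OF g cf uw] by blast
  have "E1 \<subseteq> E - {{w, z}}" using sub(2) \<open>w \<notin> V1\<close> graph_edge_subset[OF g1] by blast
  then have "V1 \<subseteq> side V E w z"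
    using connected_subgraph_within_side[OF g _ c1 \<open>x \<in> V1\<close> z(3)] by blast
  then have "card V1 \<le> k" using small[OF z(1,2)] card_mono[OF finite_side[OF g]] le_trans by blast
  with tree_card_edges[OF t1(1)] t1(2) show False by simp
qed

lemma minimal_large_side_branch:
  assumes t: "tree V E" and deg: "\<forall>v\<in>V. degree E v \<le> s"
    and uw: "adj E u w" and large: "k < card (side V E u w)"
    and minimal: "\<And>a b. adj E a b \<Longrightarrow> k < card (side V E a b) \<Longrightarrow>
                          card (side V E u w) \<le> card (side V E a b)"
  shows "branch (side V E u w) {f\<in>E. f \<subseteq> side V E u w} V E
    \<and> card (side V E u w) \<le> (s - 1) * k + 1
    \<and> tau k (side V E u w) {f\<in>E. f \<subseteq> side V E u w} = 1"
proof -
  have g: "graph V E" and cf: "cycle_free V E" using t by (simp_all add: tree_iff_cycle_free)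
  let ?B = "side V E u w" and ?EB = "{f\<in>E. f \<subseteq> side V E u w}"
  have small: "card (side V E w z) \<le> k" if "adj E w z" "z \<noteq> u" for z
  proof (rule ccontr)
    assume "\<not> card (side V E w z) \<le> k"
    with minimal that have "card ?B \<le> card (side V E w z)" by simp
    moreover have "card (side V E w z) < card ?B"
      using side_psubset_side[OF g cf uw that] finite_side[OF g] by (rule psubset_card_mono[rotated])
    ultimately show False by simp
  qed
  have "w \<in> V" using graph_adj_vertices[OF g uw] by simp
  with deg have "card ?B \<le> (s - 1) * k + 1" using card_side_le[OF g cf uw _ small] by blast
  moreover have "tau k ?B ?EB = 1"
  proof -
    obtain V0 E0 where "subgraph V0 E0 ?B ?EB" "tree V0 E0" "card E0 = k"
      using tree_subtree_card_edges[OF tree_side[OF g cf uw] large] by blast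
    moreover have "w \<in> V1" if "subgraph V1 E1 ?B ?EB" "tree V1 E1" "card E1 = k" for V1 E1
      using that subtree_of_side_contains_target[OF g cf uw small] unfolding subgraph_def by blast
    ultimately show ?thesis by (intro tau_eq_1I) blast+
  qed
  ultimately show ?thesis using side_branch[OF t uw] by blast
qed

lemma card_le_of_small_sides:
  assumes t: "tree V E" and "1 < card V" and small: "\<And>a b. adj E a b \<Longrightarrow> card (side V E a b) \<le> k"
  shows "card V \<le> 2 * k"
proof -
  have g: "graph V E" and c: "connected_graph V E" using t by (simp_all add: tree_iff_cycle_free)
  have "finite V" using \<open>1 < card V\<close> by (simp add: card_ge_0_finite)
  then obtain x y where "x \<in> V" "y \<in> V" "x \<noteq> y"
    using \<open>1 < card V\<close> card_le_Suc0_iff_eq by (metis One_nat_def not_le)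
  with c have "(adj E)\<^sup>*\<^sup>* x y" unfolding connected_graph_def by blast
  with \<open>x \<noteq> y\<close> obtain z where xz: "adj E x z" by (metis converse_rtranclpE)
  then have "card V \<le> card (side V E x z) + card (side V E z x)"
    using side_cover[OF g c xz] card_Un_le by metis
  also have "\<dots> \<le> 2 * k" using small xz adj_commute by (metis add_mono mult_2)
  finally show ?thesis .
qed

lemma tau_eq_1_if_card_le:
  assumes t: "tree V E" and "k < card V" "card V \<le> 2 * k + 1"
  shows "tau k V E = 1"
proof -
  obtain V0 E0 where "subgraph V0 E0 V E" "tree V0 E0" "card E0 = k"
    using tree_subtree_card_edges[OF t \<open>k < card V\<close>] by blast
  moreover have "V1 \<inter> V2 \<noteq> {}"
    if "subgraph V1 E1 V E" "tree V1 E1" "card E1 = k" "subgraph V2 E2 V E" "tree V2 E2" "card E2 = k"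
    for V1 E1 V2 E2
  proof
    assume disj: "V1 \<inter> V2 = {}"
    have "V1 \<union> V2 \<subseteq> V" "finite V"
      using that(1,4) graph_finite t unfolding subgraph_def tree_def by auto
    then have "card V1 + card V2 \<le> card V"
      using disj by (metis card_Un_disjoint card_mono finite_subset le_sup_iff)
    moreover have "k < card V1" using tree_card_edges[OF that(2)] that(3) by simp
    moreover have "k < card V2" using tree_card_edges[OF that(5)] that(6) by simp
    ultimately show False using \<open>card V \<le> 2 * k + 1\<close> by simp
  qed
  ultimately show ?thesis by (intro tau_eq_1I) blast+
qed

theorem lemma7p1:
  fixes s k :: nat and V :: "'a set" and E :: "'a set set"
  assumes "s \<ge> 3" and "k \<ge> 1"
    and "tree V E"
    and "\<forall>v\<in>V. degree E v \<le> s"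
    and "card V \<ge> k + 1"
  shows "\<exists>VB EB. branch VB EB V E \<and> card VB \<le> (s - 1) * k + 1 \<and> tau k VB EB = 1"
proof (cases "\<exists>a b. adj E a b \<and> k < card (side V E a b)")
  case True
  then obtain u w where "adj E u w" "k < card (side V E u w)"
    and "\<And>a b. adj E a b \<Longrightarrow> k < card (side V E a b) \<Longrightarrow> card (side V E u w) \<le> card (side V E a b)"
    using ex_has_least_nat[of "\<lambda>(a, b). adj E a b \<and> k < card (side V E a b)" _
        "\<lambda>(a, b). card (side V E a b)"] by fastforce
  then show ?thesis using minimal_large_side_branch[OF assms(3,4)] by blast
next
  case False
  then have "card (side V E a b) \<le> k" if "adj E a b" for a b using that not_less by blast
  then have "card V \<le> 2 * k" using card_le_of_small_sides[OF assms(3)] assms(2,5) by simp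
  moreover have "2 * k \<le> (s - 1) * k" using assms(1) by (intro mult_le_mono1) linarith
  ultimately have "card V \<le> (s - 1) * k + 1" by linarith
  moreover have "branch V E V E" using assms(3) unfolding branch_def subgraph_def tree_def by simp
  moreover have "tau k V E = 1"
    using tau_eq_1_if_card_le[OF assms(3)] assms(5) \<open>card V \<le> 2 * k\<close> by simp
  ultimately show ?thesis by (intro exI[of _ V] exI[of _ E]) simp
qed

end
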